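(* Assume the setting in the context. Let $x_i,x_j\in X$ be distinct. (i) If there exist $G_1,G_2\in\mathcal G$ and $M,N\subseteq X\setminus\{x_i,x_j\}$ with $x_i-G_1(M\cup\{x_j\})\perp\!\!\!\perp x_j-G_2(N)$, then $(x_i,x_j)$ is not invisible and $x_i$ is not a parent of $x_j$. (ii) If there exist $G_1,G_2\in\mathcal G$ and $M,N\subseteq X\setminus\{x_i,x_j\}$ with $x_i-G_1(M)\perp\!\!\!\perp x_j-G_2(N\cup\{x_i\})$, then $(x_i,x_j)$ is not invisible and $x_j$ is not a parent of $x_i$. (iii) If the hypotheses of both (i) and (ii) hold, then $(x_i,x_j)$ is a visible non-edge.
   Context: Model: $X$ is a finite set of observed random variables and $U$ a finite set of unobserved random variables; $V=X\cup U$ and $G=(V,E)$ is a DAG on $V$. Each $v_i\in V$ satisfies $v_i=\sum_{x_j\in \mathrm{pa}(v_i)\cap X} f^{(i)}_j(x_j)+\sum_{u_k\in\mathrm{pa}(v_i)\cap U} f^{(i)}_k(u_k)+n_i$, where the $f$'s are nonlinear functions and the external noises $n_i$ are jointly independent. "Parent", "ancestor", "path", "d-separation" refer to $G$ (a path has distinct vertices). Causal Faithfulness Condition (CFC): any conditional independence among variables of $V$ that is not entailed by d-separation in $G$ does not hold. $\perp\!\!\!\perp$ denotes statistical independence, $\not\perp\!\!\!\perp$ dependence. Function class: $\mathcal G$ is a class of generalized additive functions: for $G\in\mathcal G$ and a set $M$ of observed variables, $G(M)=\sum_{x_m\in M} g_m(x_m)$ (with $G(\emptyset)=0$). It satisfies: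 for any $x_i,x_j\in X$, sets $M,N\subseteq X$, $G_1,G_2\in\mathcal G$ and external noise $n_k$, if $n_k\not\perp\!\!\!\perp x_i-G_1(M)$ and $n_k\not\perp\!\!\!\perp x_j-G_2(N)$ then $x_i-G_1(M)\not\perp\!\!\!\perp x_j-G_2(N)$. Definitions, for $X'\subseteq X$ and $x_i,x_j\in X'$: an unobserved causal path (UCP) from $x_i$ to $x_j$ w.r.t. $X'$ is a directed path $x_i\to\cdots\to v_k\to x_j$ in $G$ with $v_k\notin X'$; an unobserved backdoor path (UBP) between $x_i$ and $x_j$ w.r.t. $X'$ is a path $x_i\leftarrow v_k\leftarrow\cdots\leftarrow v\to\cdots\to v_l\to x_j$ with $v_k,v_l\notin X'$ (allowing $v=v_k$, $v=v_l$, or $v=v_k=v_l$; $v$ may be in $X'$). "UBP/UCP between $x_i$ and $x_j$" means a UBP or a UCP in either direction. $x_j$ is a visible parent of $x_i$ w.r.t. $X'$ if $x_j$ is a parent of $x_i$ and there is no UBP/UCP between them w.r.t. $X'$; $(x_i,x_j)$ is a visible non-edge w.r.t. $X'$ if there is no edge between them and no UBP/UCP between them w.r.t. $X'$; $(x_i,x_j)$ is invisible w.r.t. $X'$ if there is a UBP/UCP between them w.r.t. $X'$. When $X'$ is omitted, $X'=X$. Standing facts (taken as known), for $X'\subseteq X$ and distinct $x_i,x_j\in X'$: (F1) $x_j$ is a visible parent of $x_i$ w.r.t. $X'$ iff [for all $G_1,G_2\in\mathcal G$, $M\subseteq X'\setminus\{x_i,x_j\}$, $N\subseteq X'\setminus\{x_j\}$: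 $x_i-G_1(M)\not\perp\!\!\!\perp x_j-G_2(N)$] and [there exist $G_1,G_2\in\mathcal G$, $M\subseteq X'\setminus\{x_i\}$, $N\subseteq X'\setminus\{x_i,x_j\}$ with $x_i-G_1(M)\perp\!\!\!\perp x_j-G_2(N)$]. (F2) $(x_i,x_j)$ is a visible non-edge w.r.t. $X'$ iff there exist $G_1,G_2\in\mathcal G$ and $M,N\subseteq X'\setminus\{x_i,x_j\}$ with $x_i-G_1(M)\perp\!\!\!\perp x_j-G_2(N)$. (F3) $(x_i,x_j)$ is invisible w.r.t. $X'$ iff for all $M\subseteq X'\setminus\{x_i\}$, $N\subseteq X'\setminus\{x_j\}$, $G_1,G_2\in\mathcal G$: $x_i-G_1(M)\not\perp\!\!\!\perp x_j-G_2(N)$. *)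

theory Defs
  imports "HOL-Probability.Probability"
begin

definition is_parent :: "('v \<times> 'v) set \<Rightarrow> 'v \<Rightarrow> 'v \<Rightarrow> bool" where
  "is_parent E p c \<longleftrightarrow> (p, c) \<in> E"

definition dag :: "'v set \<Rightarrow> ('v \<times> 'v) set \<Rightarrow> bool" where
  "dag V E \<longleftrightarrow> E \<subseteq> V \<times> V \<and> acyclic E"

definition is_path :: "('v \<times> 'v) set \<Rightarrow> 'v list \<Rightarrow> bool" where
  "is_path E p \<longleftrightarrow> 2 \<le> length p \<and> distinct p \<and>
     (\<forall>k. Suc k < length p \<longrightarrow> (p!k, p!Suc k) \<in> E \<or> (p!Suc k, p!k) \<in> E)"

definition directed_path :: "('v \<times> 'v) set \<Rightarrow> 'v list \<Rightarrow> bool" where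
  "directed_path E p \<longleftrightarrow> 2 \<le> length p \<and> distinct p \<and>
     (\<forall>k. Suc k < length p \<longrightarrow> (p!k, p!Suc k) \<in> E)"

definition UCP :: "('v \<times> 'v) set \<Rightarrow> 'v set \<Rightarrow> 'v \<Rightarrow> 'v \<Rightarrow> bool" where
  "UCP E X' a b \<longleftrightarrow> (\<exists>p. directed_path E p \<and> hd p = a \<and> last p = b \<and>
      p ! (length p - 2) \<notin> X')"

text \<open>Unobserved backdoor path between a and b w.r.t. X':
  a \<leftarrow> v_k \<leftarrow> ... \<leftarrow> v \<rightarrow> ... \<rightarrow> v_l \<rightarrow> b with v_k, v_l \<notin> X';
  the source v sits at position c, with 1 \<le> c \<le> length p - 2.\<close>
definition UBP :: "('v \<times> 'v) set \<Rightarrow> 'v set \<Rightarrow> 'v \<Rightarrow> 'v \<Rightarrow> bool" where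
  "UBP E X' a b \<longleftrightarrow> (\<exists>p c. is_path E p \<and> hd p = a \<and> last p = b \<and>
      1 \<le> c \<and> c + 2 \<le> length p \<and>
      (\<forall>k. k < c \<longrightarrow> (p!Suc k, p!k) \<in> E) \<and>
      (\<forall>k. c \<le> k \<and> Suc k < length p \<longrightarrow> (p!k, p!Suc k) \<in> E) \<and>
      p!1 \<notin> X' \<and> p ! (length p - 2) \<notin> X')"

definition invisible :: "('v \<times> 'v) set \<Rightarrow> 'v set \<Rightarrow> 'v \<Rightarrow> 'v \<Rightarrow> bool" where
  "invisible E X' a b \<longleftrightarrow> UBP E X' a b \<or> UBP E X' b a \<or> UCP E X' a b \<or> UCP E X' b a"

definition visible_parent :: "('v \<times> 'v) set \<Rightarrow> 'v set \<Rightarrow> 'v \<Rightarrow> 'v \<Rightarrow> bool" where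
  "visible_parent E X' a b \<longleftrightarrow> is_parent E b a \<and> \<not> invisible E X' a b"

definition visible_non_edge :: "('v \<times> 'v) set \<Rightarrow> 'v set \<Rightarrow> 'v \<Rightarrow> 'v \<Rightarrow> bool" where
  "visible_non_edge E X' a b \<longleftrightarrow> (a, b) \<notin> E \<and> (b, a) \<notin> E \<and> \<not> invisible E X' a b"

definition descendants :: "('v \<times> 'v) set \<Rightarrow> 'v \<Rightarrow> 'v set" where
  "descendants E w = {d. (w, d) \<in> E\<^sup>*}"

definition d_separated :: "('v \<times> 'v) set \<Rightarrow> 'v set \<Rightarrow> 'v set \<Rightarrow> 'v set \<Rightarrow> bool" where
  "d_separated E A B Z \<longleftrightarrow> (\<forall>p. is_path E p \<and> hd p \<in> A \<and> last p \<in> B \<longrightarrow>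
     (\<exists>k. 0 < k \<and> Suc k < length p \<and>
        (let collider = ((p!(k-1), p!k) \<in> E \<and> (p!Suc k, p!k) \<in> E) in
          (\<not> collider \<and> p!k \<in> Z) \<or> (collider \<and> descendants E (p!k) \<inter> Z = {}))))"

definition gen_sigma :: "'a measure \<Rightarrow> ('v \<Rightarrow> 'a \<Rightarrow> real) \<Rightarrow> 'v set \<Rightarrow> 'a measure" where
  "gen_sigma M val S = sigma (space M) {val s -` B \<inter> space M | s B. s \<in> S \<and> B \<in> sets borel}"

definition cond_indep :: "'a measure \<Rightarrow> ('v \<Rightarrow> 'a \<Rightarrow> real) \<Rightarrow> 'v set \<Rightarrow> 'v set \<Rightarrow> 'v set \<Rightarrow> bool" where
  "cond_indep M val A B C \<longleftrightarrow>
     (\<forall>SA \<in> sets (gen_sigma M val A). \<forall>SB \<in> sets (gen_sigma M val B).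
        AE \<omega> in M. real_cond_exp M (gen_sigma M val C) (indicator (SA \<inter> SB)) \<omega> =
          real_cond_exp M (gen_sigma M val C) (indicator SA) \<omega> *
          real_cond_exp M (gen_sigma M val C) (indicator SB) \<omega>)"

definition CFC :: "'a measure \<Rightarrow> 'v set \<Rightarrow> ('v \<times> 'v) set \<Rightarrow> ('v \<Rightarrow> 'a \<Rightarrow> real) \<Rightarrow> bool" where
  "CFC M V E val \<longleftrightarrow> (\<forall>A B C. A \<subseteq> V \<and> B \<subseteq> V \<and> C \<subseteq> V \<and> A \<inter> B = {} \<and> A \<inter> C = {} \<and> B \<inter> C = {}
      \<and> cond_indep M val A B C \<longrightarrow> d_separated E A B C)"

definition nonlinear :: "(real \<Rightarrow> real) \<Rightarrow> bool" where
  "nonlinear g \<longleftrightarrow> \<not> (\<exists>a b. \<forall>t. g t = a * t + b)"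

definition model :: "'a measure \<Rightarrow> 'v set \<Rightarrow> 'v set \<Rightarrow> 'v set \<Rightarrow> ('v \<times> 'v) set \<Rightarrow>
    ('v \<Rightarrow> 'a \<Rightarrow> real) \<Rightarrow> ('v \<Rightarrow> 'a \<Rightarrow> real) \<Rightarrow> ('v \<Rightarrow> 'v \<Rightarrow> real \<Rightarrow> real) \<Rightarrow> bool" where
  "model M V X U E val noise f \<longleftrightarrow>
     prob_space M \<and> finite V \<and> V = X \<union> U \<and> X \<inter> U = {} \<and> dag V E \<and>
     (\<forall>v\<in>V. noise v \<in> borel_measurable M \<and> val v \<in> borel_measurable M) \<and>
     (\<forall>v\<in>V. \<forall>p\<in>V. (p, v) \<in> E \<longrightarrow> f v p \<in> borel_measurable borel \<and> nonlinear (f v p)) \<and>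
     (\<forall>v\<in>V. \<forall>\<omega>\<in>space M.
        val v \<omega> = (\<Sum>p\<in>{p\<in>V. (p, v) \<in> E}. f v p (val p \<omega>)) + noise v \<omega>) \<and>
     prob_space.indep_vars M (\<lambda>_. borel) noise V"

definition resid :: "('v \<Rightarrow> 'a \<Rightarrow> real) \<Rightarrow> 'v \<Rightarrow> ('v \<Rightarrow> real \<Rightarrow> real) \<Rightarrow> 'v set \<Rightarrow> 'a \<Rightarrow> real" where
  "resid val x g S = (\<lambda>\<omega>. val x \<omega> - (\<Sum>m\<in>S. g m (val m \<omega>)))"

abbreviation indep :: "'a measure \<Rightarrow> ('a \<Rightarrow> real) \<Rightarrow> ('a \<Rightarrow> real) \<Rightarrow> bool" where
  "indep M a b \<equiv> prob_space.indep_var M borel a borel b"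

definition GA_class :: "'a measure \<Rightarrow> 'v set \<Rightarrow> 'v set \<Rightarrow> ('v \<Rightarrow> 'a \<Rightarrow> real) \<Rightarrow> ('v \<Rightarrow> 'a \<Rightarrow> real)
    \<Rightarrow> ('v \<Rightarrow> real \<Rightarrow> real) set \<Rightarrow> bool" where
  "GA_class M V X val noise \<G> \<longleftrightarrow>
     (\<forall>g\<in>\<G>. \<forall>m. g m \<in> borel_measurable borel) \<and>
     (\<forall>xi\<in>X. \<forall>xj\<in>X. \<forall>S T. \<forall>G1\<in>\<G>. \<forall>G2\<in>\<G>. \<forall>k\<in>V.
        S \<subseteq> X \<and> T \<subseteq> X \<and>
        \<not> indep M (noise k) (resid val xi G1 S) \<and> \<not> indep M (noise k) (resid val xj G2 T) \<longrightarrow>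
        \<not> indep M (resid val xi G1 S) (resid val xj G2 T))"

end

theory Submission
  imports Defs
begin

text \<open>The lemma is pure bookkeeping on the characterizations F1 and F3. An independence
  in which the regressor set of x_j contains x_i is a witness against the universal
  dependence that F3 demands of an invisible pair, and equally against the universal
  dependence that F1 demands when x_j is a visible parent of x_i; so x_j is no parent
  at all. Part (i) is part (ii) with the roles of x_i and x_j exchanged, and with both
  parents ruled out the pair is a visible non-edge.\<close>

lemma (in prob_space) indep_var_sym:
  assumes "indep_var Ma a Mb b"
  shows "indep_var Mb b Ma a"
proof -
  have "indep_set A B \<Longrightarrow> indep_set B A" for A B
    unfolding indep_sets2_eq by (metis inf_commute mult.commute)
  then show ?thesis
    using assms by (simp only: indep_var_eq)
qed

lemma invisible_sym: "invisible E X' a b \<longleftrightarrow> invisible E X' b a"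
  unfolding invisible_def by blast

lemma not_invisible_not_parent_if_indep_resid_insert:
  assumes F1: "visible_parent E X a b \<Longrightarrow>
      \<forall>G1\<in>\<G>. \<forall>G2\<in>\<G>. \<forall>S T. S \<subseteq> X - {a, b} \<and> T \<subseteq> X - {b} \<longrightarrow>
        \<not> indep M (resid val a G1 S) (resid val b G2 T)"
    and F3: "invisible E X a b \<Longrightarrow>
      \<forall>S T. \<forall>G1\<in>\<G>. \<forall>G2\<in>\<G>. S \<subseteq> X - {a} \<and> T \<subseteq> X - {b} \<longrightarrow>
        \<not> indep M (resid val a G1 S) (resid val b G2 T)"
    and a: "a \<in> X" "a \<noteq> b"
    and G: "G1 \<in> \<G>" "G2 \<in> \<G>" and S: "S \<subseteq> X - {a, b}" and T: "T \<subseteq> X - {a, b}"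
    and ind: "indep M (resid val a G1 S) (resid val b G2 (T \<union> {a}))"
  shows "\<not> invisible E X a b \<and> \<not> is_parent E b a"
proof -
  have T_ins: "T \<union> {a} \<subseteq> X - {b}"
    using T a by blast
  have S_del: "S \<subseteq> X - {a}"
    using S by blast
  have not_inv: "\<not> invisible E X a b"
  proof
    assume "invisible E X a b"
    then have "\<not> indep M (resid val a G1 S) (resid val b G2 (T \<union> {a}))"
      using F3 G S_del T_ins by simp
    with ind show False by contradiction
  qed
  have "\<not> visible_parent E X a b"
  proof
    assume "visible_parent E X a b"
    then have "\<not> indep M (resid val a G1 S) (resid val b G2 (T \<union> {a}))"
      using F1 G S T_ins by simp
    with ind show False by contradiction
  qed
  with not_inv show ?thesis
    unfolding visible_parent_def by blast
qed

theorem lemma9: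
  fixes M :: "'a measure" and V X U :: "'v set" and E :: "('v \<times> 'v) set"
    and val noise :: "'v \<Rightarrow> 'a \<Rightarrow> real" and f :: "'v \<Rightarrow> 'v \<Rightarrow> real \<Rightarrow> real"
    and \<G> :: "('v \<Rightarrow> real \<Rightarrow> real) set" and xi xj :: 'v
  assumes mdl: "model M V X U E val noise f"
    and cfc: "CFC M V E val"
    and cls: "GA_class M V X val noise \<G>"
    and F1: "\<And>X' a b. X' \<subseteq> X \<Longrightarrow> a \<in> X' \<Longrightarrow> b \<in> X' \<Longrightarrow> a \<noteq> b \<Longrightarrow>
       visible_parent E X' a b \<longleftrightarrow>
         ((\<forall>G1\<in>\<G>. \<forall>G2\<in>\<G>. \<forall>S T. S \<subseteq> X' - {a, b} \<and> T \<subseteq> X' - {b} \<longrightarrow>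
              \<not> indep M (resid val a G1 S) (resid val b G2 T)) \<and>
          (\<exists>G1\<in>\<G>. \<exists>G2\<in>\<G>. \<exists>S T. S \<subseteq> X' - {a} \<and> T \<subseteq> X' - {a, b} \<and>
              indep M (resid val a G1 S) (resid val b G2 T)))"
    and F2: "\<And>X' a b. X' \<subseteq> X \<Longrightarrow> a \<in> X' \<Longrightarrow> b \<in> X' \<Longrightarrow> a \<noteq> b \<Longrightarrow>
       visible_non_edge E X' a b \<longleftrightarrow>
         (\<exists>G1\<in>\<G>. \<exists>G2\<in>\<G>. \<exists>S T. S \<subseteq> X' - {a, b} \<and> T \<subseteq> X' - {a, b} \<and>
              indep M (resid val a G1 S) (resid val b G2 T))"
    and F3: "\<And>X' a b. X' \<subseteq> X \<Longrightarrow> a \<in> X' \<Longrightarrow> b \<in> X' \<Longrightarrow> a \<noteq> b \<Longrightarrow>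
       invisible E X' a b \<longleftrightarrow>
         (\<forall>S T. \<forall>G1\<in>\<G>. \<forall>G2\<in>\<G>. S \<subseteq> X' - {a} \<and> T \<subseteq> X' - {b} \<longrightarrow>
              \<not> indep M (resid val a G1 S) (resid val b G2 T))"
    and xi: "xi \<in> X" and xj: "xj \<in> X" and dist: "xi \<noteq> xj"
  shows "((\<exists>G1\<in>\<G>. \<exists>G2\<in>\<G>. \<exists>S T. S \<subseteq> X - {xi, xj} \<and> T \<subseteq> X - {xi, xj} \<and>
              indep M (resid val xi G1 (S \<union> {xj})) (resid val xj G2 T))
           \<longrightarrow> \<not> invisible E X xi xj \<and> \<not> is_parent E xi xj)
       \<and> ((\<exists>G1\<in>\<G>. \<exists>G2\<in>\<G>. \<exists>S T. S \<subseteq> X - {xi, xj} \<and> T \<subseteq> X - {xi, xj} \<and>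
              indep M (resid val xi G1 S) (resid val xj G2 (T \<union> {xi})))
           \<longrightarrow> \<not> invisible E X xi xj \<and> \<not> is_parent E xj xi)
       \<and> (((\<exists>G1\<in>\<G>. \<exists>G2\<in>\<G>. \<exists>S T. S \<subseteq> X - {xi, xj} \<and> T \<subseteq> X - {xi, xj} \<and>
              indep M (resid val xi G1 (S \<union> {xj})) (resid val xj G2 T)) \<and>
           (\<exists>G1\<in>\<G>. \<exists>G2\<in>\<G>. \<exists>S T. S \<subseteq> X - {xi, xj} \<and> T \<subseteq> X - {xi, xj} \<and>
              indep M (resid val xi G1 S) (resid val xj G2 (T \<union> {xi}))))
           \<longrightarrow> visible_non_edge E X xi xj)"
proof -
  have ps: "prob_space M"
    using mdl unfolding model_def by simp
  have part_ii: "\<not> invisible E X xi xj \<and> \<not> is_parent E xj xi"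
    if "\<exists>G1\<in>\<G>. \<exists>G2\<in>\<G>. \<exists>S T. S \<subseteq> X - {xi, xj} \<and> T \<subseteq> X - {xi, xj} \<and>
          indep M (resid val xi G1 S) (resid val xj G2 (T \<union> {xi}))"
  proof -
    from that obtain G1 G2 S T where G: "G1 \<in> \<G>" "G2 \<in> \<G>"
      and ST: "S \<subseteq> X - {xi, xj}" "T \<subseteq> X - {xi, xj}"
      and ind: "indep M (resid val xi G1 S) (resid val xj G2 (T \<union> {xi}))"
      by blast
    show ?thesis
      by (rule not_invisible_not_parent_if_indep_resid_insert
          [OF conjunct1[OF F1[OF _ xi xj dist, THEN iffD1]]
            F3[OF _ xi xj dist, THEN iffD1] xi dist G ST ind]) simp_all
  qed
  have part_i: "\<not> invisible E X xi xj \<and> \<not> is_parent E xi xj"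
    if "\<exists>G1\<in>\<G>. \<exists>G2\<in>\<G>. \<exists>S T. S \<subseteq> X - {xi, xj} \<and> T \<subseteq> X - {xi, xj} \<and>
          indep M (resid val xi G1 (S \<union> {xj})) (resid val xj G2 T)"
  proof -
    from that obtain G1 G2 S T where G: "G1 \<in> \<G>" "G2 \<in> \<G>"
      and ST: "S \<subseteq> X - {xi, xj}" "T \<subseteq> X - {xi, xj}"
      and ind: "indep M (resid val xi G1 (S \<union> {xj})) (resid val xj G2 T)"
      by blast
    have TS: "T \<subseteq> X - {xj, xi}" "S \<subseteq> X - {xj, xi}"
      using ST by blast+
    have "\<not> invisible E X xj xi \<and> \<not> is_parent E xi xj"
      by (rule not_invisible_not_parent_if_indep_resid_insert
          [OF conjunct1[OF F1[OF _ xj xi dist[symmetric], THEN iffD1]]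
            F3[OF _ xj xi dist[symmetric], THEN iffD1] xj dist[symmetric] G(2,1) TS
            prob_space.indep_var_sym[OF ps ind]]) simp_all
    then show ?thesis
      using invisible_sym by metis
  qed
  show ?thesis
    using part_i part_ii unfolding visible_non_edge_def is_parent_def by blast
qed

end
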